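(* For all positive integers $\ell$ and $d$, the forwarding index of the BCube network satisfies $$\pi(\mathcal{B}(\ell,d)) = d^{\ell}-d^{\ell-1}.$$
   Context: The BCube $\mathcal{B}(\ell,d)$ ($\ell,d$ positive integers) is the symmetric digraph defined as follows, with $\mathbb{Z}_d=\{0,1,\dots,d-1\}$. - Hosts: all vectors $\mathbf{h}=h_1\cdots h_\ell\in\mathbb{Z}_d^{\ell}$. - Switches: for each layer $k\in\{1,\dots,\ell\}$, one switch $\mathbf{s}^k$ for each vector $s^k_1\cdots s^k_{\ell-1}\in\mathbb{Z}_d^{\ell-1}$. Switches of different layers are distinct vertices. - Links: host $\mathbf{h}$ and layer-$k$ switch $\mathbf{s}^k$ are joined if and only if $s^k_1\cdots s^k_{\ell-1}=h_1\cdots h_{k-1}h_{k+1}\cdots h_\ell$. Each such link gives two arcs, an uplink (host $\to$ switch) and a downlink (switch $\to$ host), both said to be at layer $k$. There are no other arcs. A host-to-host routing $R$ assigns to every ordered pair $(\mathbf{h}^s,\mathbf{h}^d)$ of distinct hosts one directed path $P_{\mathbf{h}^s,\mathbf{h}^d}$ from $\mathbf{h}^s$ to $\mathbf{h}^d$ in $\mathcal{B}(\ell,d)$. The load of an arc is the number of paths of $R$ containing it, and $\pi(\mathcal{B}(\ell,d),R)$ is the maximum load over all arcs. The forwarding index $\pi(\mathcal{B}(\ell,d))$ is the minimum of $\pi(\mathcal{B}(\ell,d),R)$ over all host-to-host routings $R$. *)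

theory Defs
  imports Main
begin

text \<open>Vertices of the BCube B(l,d): hosts are vectors in Z_d^l (lists of length l with
  entries < d); a switch of layer k (1 \<le> k \<le> l) is given by its layer and a vector in Z_d^(l-1).\<close>
datatype vertex = Host "nat list" | Switch nat "nat list"

definition hosts :: "nat \<Rightarrow> nat \<Rightarrow> nat list set" where
  "hosts l d = {h. length h = l \<and> set h \<subseteq> {..<d}}"

definition switches :: "nat \<Rightarrow> nat \<Rightarrow> vertex set" where
  "switches l d = {Switch k s | k s. 1 \<le> k \<and> k \<le> l \<and> length s = l - 1 \<and> set s \<subseteq> {..<d}}"

definition linked :: "nat \<Rightarrow> nat \<Rightarrow> nat list \<Rightarrow> nat \<Rightarrow> nat list \<Rightarrow> bool" where
  "linked l d h k s \<longleftrightarrow> h \<in> hosts l d \<and> 1 \<le> k \<and> k \<le> l \<and> Switch k s \<in> switches l d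
     \<and> s = take (k - 1) h @ drop k h"

definition bcube_arcs :: "nat \<Rightarrow> nat \<Rightarrow> (vertex \<times> vertex) set" where
  "bcube_arcs l d =
     {(Host h, Switch k s) | h k s. linked l d h k s} \<union>
     {(Switch k s, Host h) | h k s. linked l d h k s}"

definition is_dpath :: "('v \<times> 'v) set \<Rightarrow> 'v list \<Rightarrow> 'v \<Rightarrow> 'v \<Rightarrow> bool" where
  "is_dpath A p x y \<longleftrightarrow> p \<noteq> [] \<and> hd p = x \<and> last p = y \<and> distinct p \<and>
     (\<forall>i. i + 1 < length p \<longrightarrow> (p ! i, p ! (i + 1)) \<in> A)"

definition path_arcs :: "'v list \<Rightarrow> ('v \<times> 'v) set" where
  "path_arcs p = set (zip p (tl p))"

definition is_routing :: "nat \<Rightarrow> nat \<Rightarrow> (nat list \<Rightarrow> nat list \<Rightarrow> vertex list) \<Rightarrow> bool" where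
  "is_routing l d R \<longleftrightarrow> (\<forall>hs \<in> hosts l d. \<forall>hd \<in> hosts l d. hs \<noteq> hd \<longrightarrow>
      is_dpath (bcube_arcs l d) (R hs hd) (Host hs) (Host hd))"

definition arc_load :: "nat \<Rightarrow> nat \<Rightarrow> (nat list \<Rightarrow> nat list \<Rightarrow> vertex list) \<Rightarrow> vertex \<times> vertex \<Rightarrow> nat" where
  "arc_load l d R a = card {(hs, hd). hs \<in> hosts l d \<and> hd \<in> hosts l d \<and> hs \<noteq> hd \<and>
      a \<in> path_arcs (R hs hd)}"

definition routing_load :: "nat \<Rightarrow> nat \<Rightarrow> (nat list \<Rightarrow> nat list \<Rightarrow> vertex list) \<Rightarrow> nat" where
  "routing_load l d R = Max (arc_load l d R ` bcube_arcs l d)"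

definition forwarding_index :: "nat \<Rightarrow> nat \<Rightarrow> nat" where
  "forwarding_index l d = (LEAST p. \<exists>R. is_routing l d R \<and> routing_load l d R = p)"

end

theory Submission
  imports Defs
begin

text \<open>Upper bound: route from x to y by correcting the digits in the order 1, ..., l, visiting
  the hybrid hosts that agree with y on a prefix and with x on the rest. If a pair (x, y)
  uses an arc leaving or entering the hybrid host h after correcting m digits, then (x, y)
  is recovered from h and the complementary hybrid z (prefix of x, rest of y), and the
  corrected digit j of z differs from that of h; so each arc carries at most the number of
  hosts z with z_j \<noteq> h_j, which is d^l - d^(l-1).

  Lower bound: a path between hosts with different first digits must traverse a layer-1
  uplink, since every other arc preserves the first digit. There are d^l such uplinks and
  d^l (d^l - d^(l-1)) such pairs.\<close>

lemma hosts_eq_lists: "hosts l d = {xs. set xs \<subseteq> {..<d} \<and> length xs = l}"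
  unfolding hosts_def by auto

lemma finite_hosts: "finite (hosts l d)"
  unfolding hosts_eq_lists by (rule finite_lists_length_eq) simp

lemma card_hosts: "card (hosts l d) = d ^ l"
  unfolding hosts_eq_lists by (subst card_lists_length_eq) simp_all

lemma nth_hosts_less: "h \<in> hosts l d \<Longrightarrow> i < l \<Longrightarrow> h ! i < d"
  unfolding hosts_def by (auto dest: nth_mem)

lemma card_hosts_nth_eq:
  assumes "j < l" "c < d"
  shows "card {z \<in> hosts l d. z ! j = c} = d ^ (l - 1)"
proof -
  have "bij_betw (\<lambda>z. take j z @ drop (Suc j) z) {z \<in> hosts l d. z ! j = c} (hosts (l - 1) d)"
  proof (rule bij_betw_byWitness[where f' = "\<lambda>w. take j w @ c # drop j w"])
    show "\<forall>z\<in>{z \<in> hosts l d. z ! j = c}.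
        take j (take j z @ drop (Suc j) z) @ c # drop j (take j z @ drop (Suc j) z) = z"
      using assms by (auto simp: hosts_def min_def id_take_nth_drop[symmetric])
    show "\<forall>w\<in>hosts (l - 1) d.
        take j (take j w @ c # drop j w) @ drop (Suc j) (take j w @ c # drop j w) = w"
      using assms by (auto simp: hosts_def min_def)
    show "(\<lambda>z. take j z @ drop (Suc j) z) ` {z \<in> hosts l d. z ! j = c} \<subseteq> hosts (l - 1) d"
      using assms by (auto simp: hosts_def dest!: in_set_takeD in_set_dropD)
    show "(\<lambda>w. take j w @ c # drop j w) ` hosts (l - 1) d \<subseteq> {z \<in> hosts l d. z ! j = c}"
      using assms by (auto simp: hosts_def nth_append min_def dest!: in_set_takeD in_set_dropD)
  qed
  then show ?thesis by (simp add: bij_betw_same_card card_hosts)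
qed

lemma card_hosts_nth_neq:
  assumes "j < l" "c < d"
  shows "card {z \<in> hosts l d. z ! j \<noteq> c} = d ^ l - d ^ (l - 1)"
proof -
  have "{z \<in> hosts l d. z ! j \<noteq> c} = hosts l d - {z \<in> hosts l d. z ! j = c}" by auto
  then show ?thesis
    using card_Diff_subset[of "{z \<in> hosts l d. z ! j = c}" "hosts l d"] finite_hosts
      card_hosts card_hosts_nth_eq[OF assms] by (simp add: finite_subset)
qed

lemma uplink_iff: "(Host h, Switch k s) \<in> bcube_arcs l d \<longleftrightarrow> linked l d h k s"
  unfolding bcube_arcs_def by auto

lemma downlink_iff: "(Switch k s, Host h) \<in> bcube_arcs l d \<longleftrightarrow> linked l d h k s"
  unfolding bcube_arcs_def by auto

lemma bcube_arcs_cases: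
  assumes "a \<in> bcube_arcs l d"
  obtains h k s where "linked l d h k s" "a = (Host h, Switch k s)"
    | h k s where "linked l d h k s" "a = (Switch k s, Host h)"
  using assms unfolding bcube_arcs_def by blast

lemma linked_drop_layer1: "h \<in> hosts l d \<Longrightarrow> 1 \<le> l \<Longrightarrow> linked l d h 1 (drop 1 h)"
  unfolding linked_def switches_def hosts_def by (auto dest!: in_set_dropD)

lemma finite_bcube_arcs: "finite (bcube_arcs l d)"
proof -
  let ?sw = "\<lambda>h k. Switch k (take (k - 1) h @ drop k h)"
  have "bcube_arcs l d \<subseteq> (\<lambda>(h, k). (Host h, ?sw h k)) ` (hosts l d \<times> {1..l}) \<union>
      (\<lambda>(h, k). (?sw h k, Host h)) ` (hosts l d \<times> {1..l})"
    unfolding bcube_arcs_def linked_def by force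
  then show ?thesis by (rule finite_subset) (simp add: finite_hosts)
qed

lemma mem_path_arcs:
  "(u, v) \<in> path_arcs p \<longleftrightarrow> (\<exists>i. i + 1 < length p \<and> u = p ! i \<and> v = p ! (i + 1))"
  unfolding path_arcs_def set_zip by (force simp: nth_tl)

lemma is_dpath_iff:
  "is_dpath A p x y \<longleftrightarrow> p \<noteq> [] \<and> hd p = x \<and> last p = y \<and> distinct p \<and> path_arcs p \<subseteq> A"
proof -
  have "path_arcs p \<subseteq> A \<longleftrightarrow> (\<forall>i. i + 1 < length p \<longrightarrow> (p ! i, p ! (i + 1)) \<in> A)"
    unfolding subset_iff split_paired_All mem_path_arcs by blast
  then show ?thesis unfolding is_dpath_def by blast
qed

lemma path_arcs_Cons_Cons: "path_arcs (a # b # p) = insert (a, b) (path_arcs (b # p))"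
  unfolding path_arcs_def by simp

lemma path_arcs_singleton: "path_arcs [a] = {}"
  unfolding path_arcs_def by simp

subsection \<open>The digit-correcting routing\<close>

definition hybrid :: "nat list \<Rightarrow> nat list \<Rightarrow> nat \<Rightarrow> nat list" where
  "hybrid x y m = take m y @ drop m x"

definition hybrid_switch :: "nat list \<Rightarrow> nat list \<Rightarrow> nat \<Rightarrow> vertex" where
  "hybrid_switch x y j = Switch (Suc j) (take j y @ drop (Suc j) x)"

text \<open>The path, without its start vertex hybrid x y j, that corrects the 0-based digits
  j, ..., j + n - 1 of x to those of y.\<close>
fun correct_digits :: "nat list \<Rightarrow> nat list \<Rightarrow> nat \<Rightarrow> nat \<Rightarrow> vertex list" where
  "correct_digits x y j 0 = []"
| "correct_digits x y j (Suc n) =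
     (if x ! j = y ! j then [] else [hybrid_switch x y j, Host (hybrid x y (Suc j))])
     @ correct_digits x y (Suc j) n"

definition digit_route :: "nat \<Rightarrow> nat list \<Rightarrow> nat list \<Rightarrow> vertex list" where
  "digit_route l x y = Host x # correct_digits x y 0 l"

lemma hybrid_0 [simp]: "hybrid x y 0 = x"
  unfolding hybrid_def by simp

lemma hybrid_length: "length y = length x \<Longrightarrow> hybrid x y (length x) = y"
  unfolding hybrid_def by simp

lemma nth_hybrid:
  "i < length x \<Longrightarrow> length y = length x \<Longrightarrow> hybrid x y m ! i = (if i < m then y ! i else x ! i)"
  unfolding hybrid_def by (auto simp: nth_append min_def)

lemma hybrid_Suc_same_digit:
  "j < length x \<Longrightarrow> length y = length x \<Longrightarrow> x ! j = y ! j \<Longrightarrow> hybrid x y (Suc j) = hybrid x y j"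
  unfolding hybrid_def by (simp add: take_Suc_conv_app_nth) (metis Cons_nth_drop_Suc)

lemma hybrid_in_hosts: "x \<in> hosts l d \<Longrightarrow> y \<in> hosts l d \<Longrightarrow> hybrid x y m \<in> hosts l d"
  unfolding hosts_def hybrid_def by (auto dest!: in_set_takeD in_set_dropD)

lemma hybrid_hybrid_swap: "length y = length x \<Longrightarrow> hybrid (hybrid x y m) (hybrid y x m) m = x"
  unfolding hybrid_def by (cases "m \<le> length x") (simp_all add: min_def)

lemma set_correct_digits:
  "v \<in> set (correct_digits x y j n) \<Longrightarrow> \<exists>i. j \<le> i \<and> i < j + n \<and> x ! i \<noteq> y ! i \<and>
     (v = hybrid_switch x y i \<or> v = Host (hybrid x y (Suc i)))"
proof (induction n arbitrary: j)
  case (Suc n)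
  then consider "x ! j \<noteq> y ! j" "v = hybrid_switch x y j \<or> v = Host (hybrid x y (Suc j))"
    | "v \<in> set (correct_digits x y (Suc j) n)"
    by (auto split: if_splits)
  then show ?case
  proof cases
    case 2
    from Suc.IH[OF this] show ?thesis by (metis Suc_leD add_Suc_shift add_Suc_right)
  qed auto
qed simp

lemma path_arcs_correct_digits:
  assumes "j + n \<le> length x" "length y = length x"
    and "a \<in> path_arcs (Host (hybrid x y j) # correct_digits x y j n)"
  shows "\<exists>i. j \<le> i \<and> i < j + n \<and> x ! i \<noteq> y ! i \<and>
     (a = (Host (hybrid x y i), hybrid_switch x y i) \<or>
      a = (hybrid_switch x y i, Host (hybrid x y (Suc i))))"
  using assms
proof (induction n arbitrary: j)
  case (Suc n)
  then consider "x ! j \<noteq> y ! j" "a = (Host (hybrid x y j), hybrid_switch x y j) \<or>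
        a = (hybrid_switch x y j, Host (hybrid x y (Suc j)))"
    | "a \<in> path_arcs (Host (hybrid x y (Suc j)) # correct_digits x y (Suc j) n)"
    using hybrid_Suc_same_digit[of j x y] by (auto simp: path_arcs_Cons_Cons split: if_splits)
  then show ?case
  proof cases
    case 2
    from Suc.IH[OF _ _ this] Suc.prems show ?thesis by (metis Suc_leD add_Suc_shift add_Suc_right)
  qed auto
qed (simp add: path_arcs_singleton)

lemma last_correct_digits:
  "j + n \<le> length x \<Longrightarrow> length y = length x \<Longrightarrow>
     last (Host (hybrid x y j) # correct_digits x y j n) = Host (hybrid x y (j + n))"
proof (induction n arbitrary: j)
  case (Suc n)
  then have IH: "last (Host (hybrid x y (Suc j)) # correct_digits x y (Suc j) n) =
      Host (hybrid x y (j + Suc n))" by simp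
  show ?case
  proof (cases "x ! j = y ! j")
    case True
    then show ?thesis using IH hybrid_Suc_same_digit[of j x y] Suc.prems by simp
  qed (use IH in simp)
qed simp

lemma distinct_correct_digits:
  "j + n \<le> length x \<Longrightarrow> length y = length x \<Longrightarrow>
     distinct (Host (hybrid x y j) # correct_digits x y j n)"
proof (induction n arbitrary: j)
  case (Suc n)
  then have IH: "distinct (Host (hybrid x y (Suc j)) # correct_digits x y (Suc j) n)" by simp
  show ?case
  proof (cases "x ! j = y ! j")
    case True
    then show ?thesis using IH hybrid_Suc_same_digit[of j x y] Suc.prems by simp
  next
    case False
    have j: "j < length x" using Suc.prems by simp
    have "hybrid x y j \<noteq> hybrid x y (Suc j)"
      using nth_hybrid[OF j Suc.prems(2), of j] nth_hybrid[OF j Suc.prems(2), of "Suc j"] False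
      by auto
    moreover have "Host (hybrid x y j) \<notin> set (correct_digits x y (Suc j) n)"
    proof
      assume "Host (hybrid x y j) \<in> set (correct_digits x y (Suc j) n)"
      from set_correct_digits[OF this] obtain i where i: "Suc j \<le> i" "i < Suc j + n"
        "x ! i \<noteq> y ! i" "hybrid x y j = hybrid x y (Suc i)"
        by (auto simp: hybrid_switch_def)
      then have "i < length x" using Suc.prems(1) by simp
      then show False
        using nth_hybrid[OF _ Suc.prems(2), of i j] nth_hybrid[OF _ Suc.prems(2), of i "Suc i"] i
        by auto
    qed
    moreover have "hybrid_switch x y j \<notin> set (correct_digits x y (Suc j) n)"
      by (force simp: hybrid_switch_def dest: set_correct_digits)
    ultimately show ?thesis using False IH by (auto simp: hybrid_switch_def)
  qed
qed simp

lemma hybrid_arcs_in_bcube: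
  assumes "x \<in> hosts l d" "y \<in> hosts l d" "i < l"
  shows "(Host (hybrid x y i), hybrid_switch x y i) \<in> bcube_arcs l d"
    and "(hybrid_switch x y i, Host (hybrid x y (Suc i))) \<in> bcube_arcs l d"
proof -
  have "Switch (Suc i) (take i y @ drop (Suc i) x) \<in> switches l d"
    using assms unfolding switches_def hosts_def by (auto dest!: in_set_takeD in_set_dropD)
  moreover have "length x = l" "length y = l" using assms unfolding hosts_def by auto
  ultimately have "linked l d (hybrid x y m) (Suc i) (take i y @ drop (Suc i) x)"
    if "m \<in> {i, Suc i}" for m
    unfolding linked_def using that hybrid_in_hosts[OF assms(1,2)] assms(3)
    by (auto simp: hybrid_def min_def)
  then show "(Host (hybrid x y i), hybrid_switch x y i) \<in> bcube_arcs l d"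
    and "(hybrid_switch x y i, Host (hybrid x y (Suc i))) \<in> bcube_arcs l d"
    unfolding hybrid_switch_def by (simp_all add: uplink_iff downlink_iff)
qed

lemma path_arcs_digit_route:
  assumes "x \<in> hosts l d" "y \<in> hosts l d" "a \<in> path_arcs (digit_route l x y)"
  shows "\<exists>i<l. x ! i \<noteq> y ! i \<and>
     (a = (Host (hybrid x y i), hybrid_switch x y i) \<or>
      a = (hybrid_switch x y i, Host (hybrid x y (Suc i))))"
proof -
  have "length x = l" "length y = l" using assms(1,2) by (auto simp: hosts_def)
  then show ?thesis
    using path_arcs_correct_digits[of 0 l x y a] assms(3) by (simp add: digit_route_def)
qed

lemma is_routing_digit_route: "is_routing l d (digit_route l)"
  unfolding is_routing_def is_dpath_iff
proof (intro ballI impI conjI)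
  fix x y assume x: "x \<in> hosts l d" and y: "y \<in> hosts l d"
  have len: "length x = l" "length y = l" using x y unfolding hosts_def by auto
  then show "last (digit_route l x y) = Host y"
    using last_correct_digits[of 0 l x y] hybrid_length[of y x] by (simp add: digit_route_def)
  show "distinct (digit_route l x y)"
    using distinct_correct_digits[of 0 l x y] len by (simp add: digit_route_def)
  show "path_arcs (digit_route l x y) \<subseteq> bcube_arcs l d"
    using path_arcs_digit_route[OF x y] hybrid_arcs_in_bcube[OF x y] by blast
qed (simp_all add: digit_route_def)

subsection \<open>The upper bound\<close>

lemma card_pairs_with_hybrid_le:
  assumes "h \<in> hosts l d" "j < l"
  shows "card {(x, y). x \<in> hosts l d \<and> y \<in> hosts l d \<and> x ! j \<noteq> y ! j \<and> hybrid x y m = h}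
         \<le> d ^ l - d ^ (l - 1)"
    (is "card ?S \<le> _")
proof -
  let ?f = "\<lambda>(x, y). hybrid y x m"
  have "inj_on ?f ?S"
  proof (rule inj_onI)
    fix p q assume "p \<in> ?S" "q \<in> ?S" "?f p = ?f q"
    moreover obtain x y x' y' where pq: "p = (x, y)" "q = (x', y')" by fastforce
    ultimately have "hybrid y x m = hybrid y' x' m"
      and "length x = l" "length y = l" "length x' = l" "length y' = l"
      and "hybrid x y m = h" "hybrid x' y' m = h" by (auto simp: hosts_def)
    then show "p = q"
      using hybrid_hybrid_swap[of y x m] hybrid_hybrid_swap[of x y m]
        hybrid_hybrid_swap[of y' x' m] hybrid_hybrid_swap[of x' y' m] pq by metis
  qed
  moreover have "?f ` ?S \<subseteq> {z \<in> hosts l d. z ! j \<noteq> h ! j}"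
  proof
    fix z assume "z \<in> ?f ` ?S"
    then obtain x y where xy: "x \<in> hosts l d" "y \<in> hosts l d" "x ! j \<noteq> y ! j"
      "hybrid x y m = h" and z: "z = hybrid y x m" by auto
    then have "length x = l" "length y = l" by (auto simp: hosts_def)
    then have "z ! j \<noteq> h ! j" using xy z nth_hybrid assms(2) by auto
    then show "z \<in> {z \<in> hosts l d. z ! j \<noteq> h ! j}" using xy z hybrid_in_hosts by auto
  qed
  ultimately have "card ?S \<le> card {z \<in> hosts l d. z ! j \<noteq> h ! j}"
    by (simp add: card_inj_on_le finite_hosts)
  then show ?thesis using card_hosts_nth_neq[OF assms(2) nth_hosts_less[OF assms]] by simp
qed

lemma arc_load_digit_route_le:
  assumes "a \<in> bcube_arcs l d"
  shows "arc_load l d (digit_route l) a \<le> d ^ l - d ^ (l - 1)"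
proof -
  let ?users = "{(x, y). x \<in> hosts l d \<and> y \<in> hosts l d \<and> x \<noteq> y \<and>
      a \<in> path_arcs (digit_route l x y)}"
  obtain h k s m where "linked l d h k s"
    and a: "a = (Host h, Switch k s) \<and> m = k - 1 \<or> a = (Switch k s, Host h) \<and> m = k"
    using assms by (cases rule: bcube_arcs_cases) auto
  then have h: "h \<in> hosts l d" and j: "k - 1 < l" and k: "1 \<le> k"
    unfolding linked_def by auto
  have "?users \<subseteq>
      {(x, y). x \<in> hosts l d \<and> y \<in> hosts l d \<and> x ! (k - 1) \<noteq> y ! (k - 1) \<and> hybrid x y m = h}"
  proof (rule subrelI)
    fix x y assume "(x, y) \<in> ?users"
    then have xy: "x \<in> hosts l d" "y \<in> hosts l d" "a \<in> path_arcs (digit_route l x y)" by auto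
    from path_arcs_digit_route[OF xy] obtain i where "x ! i \<noteq> y ! i"
      "a = (Host (hybrid x y i), hybrid_switch x y i) \<or>
       a = (hybrid_switch x y i, Host (hybrid x y (Suc i)))" by blast
    with a k xy show "(x, y) \<in> {(x, y). x \<in> hosts l d \<and> y \<in> hosts l d \<and>
        x ! (k - 1) \<noteq> y ! (k - 1) \<and> hybrid x y m = h}"
      by (auto simp: hybrid_switch_def)
  qed
  then have "arc_load l d (digit_route l) a \<le>
      card {(x, y). x \<in> hosts l d \<and> y \<in> hosts l d \<and> x ! (k - 1) \<noteq> y ! (k - 1) \<and> hybrid x y m = h}"
    unfolding arc_load_def
    by (intro card_mono) (auto intro: finite_subset[of _ "hosts l d \<times> hosts l d"] simp: finite_hosts)
  also have "\<dots> \<le> d ^ l - d ^ (l - 1)" by (rule card_pairs_with_hybrid_le[OF h j])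
  finally show ?thesis .
qed

lemma bcube_arcs_nonempty: "1 \<le> l \<Longrightarrow> 1 \<le> d \<Longrightarrow> bcube_arcs l d \<noteq> {}"
  using linked_drop_layer1[of "replicate l 0" l d] uplink_iff by (force simp: hosts_def)

lemma routing_load_digit_route_le:
  "1 \<le> l \<Longrightarrow> 1 \<le> d \<Longrightarrow> routing_load l d (digit_route l) \<le> d ^ l - d ^ (l - 1)"
  unfolding routing_load_def
  using finite_bcube_arcs bcube_arcs_nonempty arc_load_digit_route_le by (simp add: Max_le_iff)

subsection \<open>The lower bound\<close>

text \<open>Hosts with first digit c and switches of layer at least 2 whose label starts with c:
  only layer-1 uplinks leave this class.\<close>
fun first_digit_class :: "nat \<Rightarrow> vertex \<Rightarrow> bool" where
  "first_digit_class c (Host z) \<longleftrightarrow> z ! 0 = c"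
| "first_digit_class c (Switch k s) \<longleftrightarrow> 2 \<le> k \<and> s ! 0 = c"

lemma linked_nth_0: "linked l d h k s \<Longrightarrow> 2 \<le> k \<Longrightarrow> s ! 0 = h ! 0"
  unfolding linked_def hosts_def by (auto simp: nth_append)

lemma first_digit_class_step:
  assumes "(u, v) \<in> bcube_arcs l d" "first_digit_class c u"
    and "\<And>h s. (u, v) \<noteq> (Host h, Switch 1 s)"
  shows "first_digit_class c v"
  using assms(1)
proof (cases rule: bcube_arcs_cases)
  case (1 h k s)
  then have "k \<noteq> 1" "1 \<le> k" using assms(3) unfolding linked_def by auto
  then show ?thesis using 1 assms(2) linked_nth_0 by auto
next
  case (2 h k s)
  then show ?thesis using assms(2) linked_nth_0 by auto
qed

lemma dpath_uses_layer1_uplink: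
  assumes "is_dpath (bcube_arcs l d) p (Host x) (Host y)" "x ! 0 \<noteq> y ! 0"
  shows "\<exists>h. h \<in> hosts l d \<and> (Host h, Switch 1 (drop 1 h)) \<in> path_arcs p"
proof (rule ccontr)
  assume none: "\<not> ?thesis"
  have p: "p \<noteq> []" "hd p = Host x" "last p = Host y" "path_arcs p \<subseteq> bcube_arcs l d"
    using assms(1) unfolding is_dpath_iff by auto
  have no_layer1: "(u, v) \<noteq> (Host h, Switch 1 s)" if "(u, v) \<in> path_arcs p" for u v h s
  proof
    assume "(u, v) = (Host h, Switch 1 s)"
    then have "linked l d h 1 s" using that p(4) uplink_iff by blast
    then show False using that none \<open>(u, v) = _\<close> unfolding linked_def by auto
  qed
  have "first_digit_class (x ! 0) (p ! i)" if "i < length p" for i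
    using that
  proof (induction i)
    case 0
    then show ?case using p(1,2) by (simp add: hd_conv_nth[symmetric])
  next
    case (Suc i)
    then have "(p ! i, p ! Suc i) \<in> path_arcs p" by (auto simp: mem_path_arcs)
    then show ?case using Suc p(4) no_layer1 first_digit_class_step by (metis Suc_lessD subsetD)
  qed
  then have "first_digit_class (x ! 0) (last p)" using p(1) by (simp add: last_conv_nth)
  then show False using p(3) assms(2) by simp
qed

lemma card_pairs_first_digit_neq:
  assumes "1 \<le> l"
  shows "card {(x, y). x \<in> hosts l d \<and> y \<in> hosts l d \<and> x ! 0 \<noteq> y ! 0}
         = d ^ l * (d ^ l - d ^ (l - 1))"
proof -
  have "{(x, y). x \<in> hosts l d \<and> y \<in> hosts l d \<and> x ! 0 \<noteq> y ! 0} =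
      Sigma (hosts l d) (\<lambda>x. {y \<in> hosts l d. y ! 0 \<noteq> x ! 0})" by auto
  also have "card \<dots> = (\<Sum>x\<in>hosts l d. d ^ l - d ^ (l - 1))"
    using assms by (simp add: finite_hosts card_hosts_nth_neq nth_hosts_less)
  finally show ?thesis by (simp add: card_hosts)
qed

lemma routing_load_ge:
  assumes "1 \<le> l" "1 \<le> d" "is_routing l d R"
  shows "d ^ l - d ^ (l - 1) \<le> routing_load l d R"
proof -
  let ?M = "routing_load l d R"
  define users where "users h = {(x, y). x \<in> hosts l d \<and> y \<in> hosts l d \<and> x \<noteq> y \<and>
      (Host h, Switch 1 (drop 1 h)) \<in> path_arcs (R x y)}" for h
  have cover: "{(x, y). x \<in> hosts l d \<and> y \<in> hosts l d \<and> x ! 0 \<noteq> y ! 0}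
      \<subseteq> (\<Union>h\<in>hosts l d. users h)"
  proof (rule subrelI)
    fix x y assume "(x, y) \<in> {(x, y). x \<in> hosts l d \<and> y \<in> hosts l d \<and> x ! 0 \<noteq> y ! 0}"
    then have xy: "x \<in> hosts l d" "y \<in> hosts l d" "x ! 0 \<noteq> y ! 0" by auto
    then have "is_dpath (bcube_arcs l d) (R x y) (Host x) (Host y)"
      using assms(3) unfolding is_routing_def by auto
    from dpath_uses_layer1_uplink[OF this xy(3)] show "(x, y) \<in> (\<Union>h\<in>hosts l d. users h)"
      using xy unfolding users_def by auto
  qed
  have "finite (\<Union>h\<in>hosts l d. users h)"
    by (rule finite_subset[of _ "hosts l d \<times> hosts l d"]) (auto simp: users_def finite_hosts)
  then have "d ^ l * (d ^ l - d ^ (l - 1)) \<le> card (\<Union>h\<in>hosts l d. users h)"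
    using card_mono[OF _ cover] card_pairs_first_digit_neq[OF assms(1)] by simp
  also have "\<dots> \<le> (\<Sum>h\<in>hosts l d. card (users h))"
    by (rule card_UN_le[OF finite_hosts])
  also have "\<dots> \<le> (\<Sum>h\<in>hosts l d. ?M)"
  proof (rule sum_mono)
    fix h assume "h \<in> hosts l d"
    then have arc: "(Host h, Switch 1 (drop 1 h)) \<in> bcube_arcs l d"
      using linked_drop_layer1 assms(1) uplink_iff by blast
    have "card (users h) = arc_load l d R (Host h, Switch 1 (drop 1 h))"
      unfolding users_def arc_load_def by simp
    also have "\<dots> \<le> ?M"
      unfolding routing_load_def by (rule Max_ge) (use finite_bcube_arcs arc in auto)
    finally show "card (users h) \<le> ?M" .
  qed
  also have "\<dots> = d ^ l * ?M" by (simp add: card_hosts)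
  finally show ?thesis using assms(2) by simp
qed

theorem theorem1:
  fixes l d :: nat
  assumes "l \<ge> 1" and "d \<ge> 1"
  shows "forwarding_index l d = d ^ l - d ^ (l - 1)"
  unfolding forwarding_index_def
proof (rule Least_equality)
  have "routing_load l d (digit_route l) = d ^ l - d ^ (l - 1)"
    using routing_load_digit_route_le routing_load_ge is_routing_digit_route assms le_antisym
    by metis
  then show "\<exists>R. is_routing l d R \<and> routing_load l d R = d ^ l - d ^ (l - 1)"
    using is_routing_digit_route by blast
next
  fix p assume "\<exists>R. is_routing l d R \<and> routing_load l d R = p"
  then show "d ^ l - d ^ (l - 1) \<le> p" using routing_load_ge[OF assms] by blast
qed

end
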